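(* Let $\mathscr P\subseteq\mathbb N^p$ be a polymatroid and fix any lexicographic order $\prec$ on $\mathbb N^p$ (used to define $\mathrm{Stal}_{\mathscr P}$). Then \[\mathrm{Cave}_{\mathscr P}(\mathbf t)=\mathrm{Stal}_{\mathscr P}(\mathbf t)=\mathrm{Box}_{\mathscr P}(\mathbf t)=\text{M\"ob}_{\mathscr P}(\mathbf t).\]
   Context: Notation: $[p]=\{1,\dots,p\}$; $\mathbf e_i$ is the $i$th standard basis vector of $\mathbb Z^p$; for $J\subseteq[p]$, $\mathbf e_J=\sum_{j\in J}\mathbf e_j$ ($\mathbf e_\varnothing=\mathbf 0$); $|\mathbf n|=n_1+\dots+n_p$; $\mathbf a\le\mathbf b$ means $a_i\le b_i$ for all $i$ (componentwise order), and $\mathbf a<\mathbf b$ means $\mathbf a\le\mathbf b$, $\mathbf a\neq\mathbf b$; $\mathbf t^{\mathbf n}=t_1^{n_1}\cdots t_p^{n_p}$. Polymatroid: a finite set $\mathscr P\subseteq\mathbb N^p$ that is homogeneous (all $\mathbf u\in\mathscr P$ have the same value of $|\mathbf u|$; this common value is the rank $\mathrm{rk}(\mathscr P)$) and M-convex: for all $\mathbf u,\mathbf v\in\mathscr P$ and $i\in[p]$ with $u_i>v_i$ there is $j\in[p]$ with $u_j<v_j$ and $\mathbf u-\mathbf e_i+\mathbf e_j\in\mathscr P$. $I(\mathscr P)$ denotes the set of lattice points of the independence polytope of $\mathscr P$, i.e. $I(\mathscr P)=\{\mathbf n\in\mathbb N^p:\mathbf n\le\mathbf u\text{ for some }\mathbf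 u\in\mathscr P\}$. The indicator function is $\mathbb 1_{\mathscr P}(\mathbf n)=1$ if $\mathbf n\in\mathscr P$ and $0$ otherwise, for $\mathbf n\in\mathbb Z^p$. Cave polynomial: $\displaystyle\mathrm{Cave}_{\mathscr P}(\mathbf t)=\sum_{\mathbf n\in\mathbb N^p,\ |\mathbf n|=\mathrm{rk}(\mathscr P)}\mathbb 1_{\mathscr P}(\mathbf n)\prod_{i=1}^{p-1}\Big(1-\max_{j>i}\{\mathbb 1_{\mathscr P}(\mathbf n-\mathbf e_i+\mathbf e_j)\}\,t_i^{-1}\Big)\mathbf t^{\mathbf n}.$ Lexicographic orders: given a total ordering $\sigma_1,\dots,\sigma_p$ of $[p]$, $\mathbf u\prec\mathbf v$ iff $\mathbf u\ne\mathbf v$ and at the first index (in the order $\sigma_1,\sigma_2,\dots$) where they differ, $\mathbf u$ has the smaller entry. The standard lex order is the one with $\sigma_k=k$. Stalactites: for $\mathbf u\in\mathscr P$ and $V\subseteq\mathscr P$ let $L(\mathbf u;V)=\{\ell\in[p]:\mathbf u-\mathbf e_\ell+\mathbf e_j\in V\text{ for some }j\in[p]\}$ and $\mathrm{St}(\mathbf u;V)=\{\mathbf u-\mathbf e_J: J\subseteq L(\mathbf u;V)\}$. List $\mathscr P=\{\mathbf a_1\prec\dots\prec\mathbf a_r\}$ in the chosen lex order; the stalactites of $\mathscr P$ are the sets $\mathrm{St}(\mathbf a_k;\{\mathbf a_1,\dots,\mathbf a_{k-1}\})$, $k=1,\dots,r$. Let $c_{\mathbf n}(\mathscr P)=\#\{k:\mathbf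 n\in\mathrm{St}(\mathbf a_k;\{\mathbf a_1,\dots,\mathbf a_{k-1}\})\}$. Stalactite polynomial: $\mathrm{Stal}_{\mathscr P}(\mathbf t)=\sum_{\mathbf n\in I(\mathscr P)}(-1)^{\mathrm{rk}(\mathscr P)-|\mathbf n|}c_{\mathbf n}(\mathscr P)\mathbf t^{\mathbf n}$. Box polynomial: $\mathrm{Box}_{\mathscr P}(\mathbf t)=\sum_{\mathbf n\in I(\mathscr P)}\prod_{i=1}^p f_{n_i}(t_i)$, where $f_0(t)=1$ and $f_k(t)=t^k-t^{k-1}$ for $k\ge1$. M\"obius polynomial: let $P$ be the poset on $I(\mathscr P)\sqcup\{\hat 1\}$ ordered componentwise on $I(\mathscr P)$, with $\hat 1$ a new maximum element. Its M\"obius function is $\mu_P(\mathbf m,\mathbf m)=1$, $\mu_P(\mathbf m,\mathbf n)=-\sum_{\mathbf m\le\mathbf a<\mathbf n}\mu_P(\mathbf m,\mathbf a)$ for $\mathbf m<\mathbf n$, and $\mu_P(\mathbf m,\mathbf n)=0$ if $\mathbf m\not\le\mathbf n$. Set $\mu_{\mathscr P}(\mathbf n)=-\mu_P(\mathbf n,\hat 1)$ for $\mathbf n\in I(\mathscr P)$, and $\text{M\"ob}_{\mathscr P}(\mathbf t)=\sum_{\mathbf n\in I(\mathscr P)}\mu_{\mathscr P}(\mathbf n)\mathbf t^{\mathbf n}$. *)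

theory Defs
  imports Main "HOL.Real"
begin

text \<open>Vectors in Z^p are functions nat => int, coordinates 0..p-1 (0-based), zero elsewhere.\<close>

definition Zp :: "nat \<Rightarrow> (nat \<Rightarrow> int) set" where
  "Zp p = {n. \<forall>i. p \<le> i \<longrightarrow> n i = 0}"

definition Np :: "nat \<Rightarrow> (nat \<Rightarrow> int) set" where
  "Np p = {n \<in> Zp p. \<forall>i<p. 0 \<le> n i}"

definition ebas :: "nat \<Rightarrow> nat \<Rightarrow> int" where
  "ebas i = (\<lambda>k. if k = i then 1 else 0)"

definition eset :: "nat set \<Rightarrow> nat \<Rightarrow> int" where
  "eset J = (\<lambda>k. if k \<in> J then 1 else 0)"

definition vsub :: "(nat \<Rightarrow> int) \<Rightarrow> (nat \<Rightarrow> int) \<Rightarrow> nat \<Rightarrow> int" where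
  "vsub u w = (\<lambda>k. u k - w k)"

definition vadd :: "(nat \<Rightarrow> int) \<Rightarrow> (nat \<Rightarrow> int) \<Rightarrow> nat \<Rightarrow> int" where
  "vadd u w = (\<lambda>k. u k + w k)"

definition vnorm :: "nat \<Rightarrow> (nat \<Rightarrow> int) \<Rightarrow> int" where
  "vnorm p n = (\<Sum>i<p. n i)"

definition polymatroid :: "nat \<Rightarrow> (nat \<Rightarrow> int) set \<Rightarrow> bool" where
  "polymatroid p P \<longleftrightarrow> finite P \<and> P \<subseteq> Np p
     \<and> (\<forall>u\<in>P. \<forall>v\<in>P. vnorm p u = vnorm p v)
     \<and> (\<forall>u\<in>P. \<forall>v\<in>P. \<forall>i<p. u i > v i \<longrightarrow>
           (\<exists>j<p. u j < v j \<and> vadd (vsub u (ebas i)) (ebas j) \<in> P))"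

definition rk :: "nat \<Rightarrow> (nat \<Rightarrow> int) set \<Rightarrow> int" where
  "rk p P = vnorm p (SOME u. u \<in> P)"

definition indep_pts :: "nat \<Rightarrow> (nat \<Rightarrow> int) set \<Rightarrow> (nat \<Rightarrow> int) set" where
  "indep_pts p P = {n \<in> Np p. \<exists>u\<in>P. n \<le> u}"

definition ind :: "(nat \<Rightarrow> int) set \<Rightarrow> (nat \<Rightarrow> int) \<Rightarrow> real" where
  "ind P n = (if n \<in> P then 1 else 0)"

definition tmon :: "nat \<Rightarrow> (nat \<Rightarrow> real) \<Rightarrow> (nat \<Rightarrow> int) \<Rightarrow> real" where
  "tmon p t n = (\<Prod>i<p. t i powi n i)"

definition Cave :: "nat \<Rightarrow> (nat \<Rightarrow> int) set \<Rightarrow> (nat \<Rightarrow> real) \<Rightarrow> real" where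
  "Cave p P t = (\<Sum>n\<in>{n \<in> Np p. vnorm p n = rk p P}.
      ind P n * (\<Prod>i<p - 1.
         (1 - (if \<exists>j. i < j \<and> j < p \<and> vadd (vsub n (ebas i)) (ebas j) \<in> P then 1 else 0) * inverse (t i)))
      * tmon p t n)"

text \<open>Lexicographic order given by a total ordering sigma 0,...,sigma (p-1) of the indices.\<close>
definition lex_less :: "nat \<Rightarrow> (nat \<Rightarrow> nat) \<Rightarrow> (nat \<Rightarrow> int) \<Rightarrow> (nat \<Rightarrow> int) \<Rightarrow> bool" where
  "lex_less p \<sigma> u v \<longleftrightarrow> u \<noteq> v \<and>
     (\<exists>k<p. (\<forall>l<k. u (\<sigma> l) = v (\<sigma> l)) \<and> u (\<sigma> k) < v (\<sigma> k))"

definition Lset :: "nat \<Rightarrow> (nat \<Rightarrow> int) \<Rightarrow> (nat \<Rightarrow> int) set \<Rightarrow> nat set" where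
  "Lset p u V = {l. l < p \<and> (\<exists>j<p. vadd (vsub u (ebas l)) (ebas j) \<in> V)}"

definition St :: "nat \<Rightarrow> (nat \<Rightarrow> int) \<Rightarrow> (nat \<Rightarrow> int) set \<Rightarrow> (nat \<Rightarrow> int) set" where
  "St p u V = {vsub u (eset J) | J. J \<subseteq> Lset p u V}"

text \<open>Number of stalactites St(a_k; {a_1,...,a_(k-1)}) containing n; note {a_1..a_(k-1)} = {v in P. v < a_k}.\<close>
definition cnt :: "nat \<Rightarrow> (nat \<Rightarrow> nat) \<Rightarrow> (nat \<Rightarrow> int) set \<Rightarrow> (nat \<Rightarrow> int) \<Rightarrow> nat" where
  "cnt p \<sigma> P n = card {u \<in> P. n \<in> St p u {v \<in> P. lex_less p \<sigma> v u}}"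

definition Stal :: "nat \<Rightarrow> (nat \<Rightarrow> nat) \<Rightarrow> (nat \<Rightarrow> int) set \<Rightarrow> (nat \<Rightarrow> real) \<Rightarrow> real" where
  "Stal p \<sigma> P t = (\<Sum>n\<in>indep_pts p P.
      (-1) ^ nat (rk p P - vnorm p n) * real (cnt p \<sigma> P n) * tmon p t n)"

definition fbox :: "nat \<Rightarrow> real \<Rightarrow> real" where
  "fbox k x = (if k = 0 then 1 else x ^ k - x ^ (k - 1))"

definition Box :: "nat \<Rightarrow> (nat \<Rightarrow> int) set \<Rightarrow> (nat \<Rightarrow> real) \<Rightarrow> real" where
  "Box p P t = (\<Sum>n\<in>indep_pts p P. \<Prod>i<p. fbox (nat (n i)) (t i))"

definition is_mobius :: "'a set \<Rightarrow> ('a \<Rightarrow> 'a \<Rightarrow> bool) \<Rightarrow> ('a \<Rightarrow> 'a \<Rightarrow> int) \<Rightarrow> bool" where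
  "is_mobius S le f \<longleftrightarrow>
     (\<forall>m n. (m \<notin> S \<or> n \<notin> S) \<longrightarrow> f m n = 0) \<and>
     (\<forall>m\<in>S. \<forall>n\<in>S. f m n =
        (if m = n then 1
         else if le m n then - (\<Sum>a\<in>{a\<in>S. le m a \<and> le a n \<and> a \<noteq> n}. f m a)
         else 0))"

definition mobius :: "'a set \<Rightarrow> ('a \<Rightarrow> 'a \<Rightarrow> bool) \<Rightarrow> 'a \<Rightarrow> 'a \<Rightarrow> int" where
  "mobius S le = (THE f. is_mobius S le f)"

text \<open>The poset I(P) with a new top element: None is the top element hat 1.\<close>
definition hatP :: "nat \<Rightarrow> (nat \<Rightarrow> int) set \<Rightarrow> (nat \<Rightarrow> int) option set" where
  "hatP p P = Some ` indep_pts p P \<union> {None}"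

definition hat_le :: "(nat \<Rightarrow> int) option \<Rightarrow> (nat \<Rightarrow> int) option \<Rightarrow> bool" where
  "hat_le x y = (case y of None \<Rightarrow> True
       | Some b \<Rightarrow> (case x of None \<Rightarrow> False | Some a \<Rightarrow> a \<le> b))"

definition muP :: "nat \<Rightarrow> (nat \<Rightarrow> int) set \<Rightarrow> (nat \<Rightarrow> int) \<Rightarrow> int" where
  "muP p P n = - mobius (hatP p P) hat_le (Some n) None"

definition Mob :: "nat \<Rightarrow> (nat \<Rightarrow> int) set \<Rightarrow> (nat \<Rightarrow> real) \<Rightarrow> real" where
  "Mob p P t = (\<Sum>n\<in>indep_pts p P. real_of_int (muP p P n) * tmon p t n)"

end

theory Submission
  imports Defs
begin

text \<open>Order the bases of the polymatroid lexicographically. Every point of I(P) lies below a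
  lexicographically first basis u, and by the exchange axiom the points whose first basis is u
  form a box: n_i = u_i for i in L(u), and 0 <= n_i <= u_i otherwise. Summing the Box polynomial
  over these boxes, and the stalactite signs over the boxes St(u), both give
  sum_u t^u prod_(i in L(u)) (1 - 1/t_i), which for the standard order is the Cave polynomial;
  since Box does not depend on the order, Cave = Stal = Box. Finally, an interval of the order
  ideal I(P) is a full box, so its Moebius function is that of a product of chains, and expanding
  each factor t^n - t^(n-1) of Box over the unit cube below n gives Box = Moeb.\<close>

section \<open>Coordinate boxes\<close>

definition coord_box :: "nat \<Rightarrow> (nat \<Rightarrow> int set) \<Rightarrow> (nat \<Rightarrow> int) set" where
  "coord_box p A = {n. (\<forall>i<p. n i \<in> A i) \<and> (\<forall>i\<ge>p. n i = 0)}"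

lemma coord_box_0 [simp]: "coord_box 0 A = {\<lambda>_. 0}"
  unfolding coord_box_def by auto

lemma coord_box_Suc: "coord_box (Suc p) A = (\<lambda>(n, k). n(p := k)) ` (coord_box p A \<times> A p)"
proof (intro equalityI subsetI)
  fix n assume n: "n \<in> coord_box (Suc p) A"
  then have "(n(p := 0), n p) \<in> coord_box p A \<times> A p"
    unfolding coord_box_def by (auto simp: le_Suc_eq)
  moreover have "n = (\<lambda>(m, k). m(p := k)) (n(p := 0), n p)" by simp
  ultimately show "n \<in> (\<lambda>(n, k). n(p := k)) ` (coord_box p A \<times> A p)" by blast
qed (auto simp: coord_box_def less_Suc_eq)

lemma inj_on_coord_box_Suc: "inj_on (\<lambda>(n, k). n(p := k)) (coord_box p A \<times> A p)"
proof (rule inj_onI, clarify)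
  fix m k m' k' assume m: "m \<in> coord_box p A" "m' \<in> coord_box p A" and eq: "m(p := k) = m'(p := k')"
  have "m p = 0" "m' p = 0" using m unfolding coord_box_def by auto
  then have "m = m'" using eq by (metis fun_upd_triv fun_upd_upd)
  moreover have "k = k'" using fun_cong[OF eq, of p] by simp
  ultimately show "m = m' \<and> k = k'" ..
qed

lemma finite_coord_box: "(\<And>i. i < p \<Longrightarrow> finite (A i)) \<Longrightarrow> finite (coord_box p A)"
  by (induction p) (simp_all add: coord_box_Suc)

lemma sum_prod_coord_box:
  fixes g :: "nat \<Rightarrow> int \<Rightarrow> 'a::comm_semiring_1"
  shows "(\<Sum>n\<in>coord_box p A. \<Prod>i<p. g i (n i)) = (\<Prod>i<p. \<Sum>k\<in>A i. g i k)"
proof (induction p)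
  case (Suc p)
  have "(\<Sum>n\<in>coord_box (Suc p) A. \<Prod>i<Suc p. g i (n i))
      = (\<Sum>(n, k)\<in>coord_box p A \<times> A p. (\<Prod>i<p. g i (n i)) * g p k)"
    unfolding coord_box_Suc
    by (subst sum.reindex[OF inj_on_coord_box_Suc]) (auto intro!: sum.cong prod.cong)
  also have "\<dots> = (\<Sum>n\<in>coord_box p A. \<Prod>i<p. g i (n i)) * (\<Sum>k\<in>A p. g p k)"
    by (simp add: sum.cartesian_product[symmetric] sum_product)
  finally show ?case by (simp add: Suc)
qed simp

section \<open>Lattice points and monomials\<close>

lemma Np_iff: "n \<in> Np p \<longleftrightarrow> (\<forall>i<p. 0 \<le> n i) \<and> (\<forall>i\<ge>p. n i = 0)"
  unfolding Np_def Zp_def by auto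

lemma Np_nonneg: "n \<in> Np p \<Longrightarrow> 0 \<le> n i"
  by (cases "i < p") (auto simp: Np_iff)

lemma Np_eq_0: "n \<in> Np p \<Longrightarrow> p \<le> i \<Longrightarrow> n i = 0"
  by (simp add: Np_iff)

lemma Np_downward_closed: "u \<in> Np p \<Longrightarrow> n \<le> u \<Longrightarrow> (\<And>i. 0 \<le> n i) \<Longrightarrow> n \<in> Np p"
  unfolding Np_iff le_fun_def by (metis order_antisym)

lemma finite_Np_vnorm: "finite {n \<in> Np p. vnorm p n = r}"
proof (rule finite_subset)
  show "{n \<in> Np p. vnorm p n = r} \<subseteq> coord_box p (\<lambda>_. {0..r})"
  proof
    fix n assume n: "n \<in> {n \<in> Np p. vnorm p n = r}"
    have "n i \<le> r" if "i < p" for i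
      using n that member_le_sum[of i "{..<p}" n] Np_nonneg unfolding vnorm_def by auto
    then show "n \<in> coord_box p (\<lambda>_. {0..r})"
      using n by (auto simp: coord_box_def Np_iff)
  qed
qed (simp add: finite_coord_box)

abbreviation move :: "(nat \<Rightarrow> int) \<Rightarrow> nat \<Rightarrow> nat \<Rightarrow> nat \<Rightarrow> int" where
  "move u i j \<equiv> vadd (vsub u (ebas i)) (ebas j)"

lemma move_apply: "move u i j k = u k - (if k = i then 1 else 0) + (if k = j then 1 else 0)"
  unfolding vadd_def vsub_def ebas_def by simp

lemma move_self [simp]: "move u i i = u"
  by (rule ext) (simp add: move_apply)

lemma Lset_pos:
  assumes "V \<subseteq> Np p" "u \<notin> V" "l \<in> Lset p u V"
  shows "l < p" "1 \<le> u l"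
proof -
  obtain j where "move u l j \<in> V" and "l < p"
    using assms(3) unfolding Lset_def by auto
  moreover from this have "j \<noteq> l" using assms(2) by auto
  ultimately show "l < p" "1 \<le> u l"
    using Np_nonneg[of "move u l j" p l] assms(1) by (auto simp: move_apply)
qed

lemma vnorm_diff: "vnorm p u - vnorm p n = (\<Sum>i<p. u i - n i)"
  unfolding vnorm_def by (simp add: sum_subtractf)

lemma sum_fbox_atLeastAtMost: "0 \<le> m \<Longrightarrow> (\<Sum>k\<in>{0..m}. fbox (nat k) x) = x powi m"
proof -
  assume "0 \<le> m"
  then have "{0..m} = int ` {..nat m}" by (auto simp: image_iff intro!: bexI[of _ "nat _"])
  moreover have "(\<Sum>k\<le>N. fbox k x) = x ^ N" for N
    by (induction N) (auto simp: fbox_def)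
  ultimately show ?thesis
    using \<open>0 \<le> m\<close> by (simp add: sum.reindex) (metis nat_0_le power_int_of_nat)
qed

lemma fbox_pos: "1 \<le> m \<Longrightarrow> fbox (nat m) x = x powi m - x powi (m - 1)"
  by (simp add: fbox_def power_int_def nat_diff_distrib')

lemma power_nat_sum:
  "(\<And>i. i \<in> A \<Longrightarrow> 0 \<le> d i) \<Longrightarrow> (x::'a::comm_monoid_mult) ^ nat (\<Sum>i\<in>A. d i) = (\<Prod>i\<in>A. x ^ nat (d i))"
proof (induction A rule: infinite_finite_induct)
  case (insert a F)
  then have "nat (\<Sum>i\<in>insert a F. d i) = nat (d a) + nat (\<Sum>i\<in>F. d i)"
    by (simp add: nat_add_distrib sum_nonneg)
  then show ?case using insert by (simp add: power_add)
qed auto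

section \<open>Lexicographic orders\<close>

lemma lex_less_irrefl: "\<not> lex_less p \<sigma> u u"
  unfolding lex_less_def by simp

lemma lex_less_trans:
  assumes "lex_less p \<sigma> a b" "lex_less p \<sigma> b c"
  shows "lex_less p \<sigma> a c"
proof -
  obtain k1 where k1: "k1 < p" "\<forall>l<k1. a (\<sigma> l) = b (\<sigma> l)" "a (\<sigma> k1) < b (\<sigma> k1)"
    using assms(1) unfolding lex_less_def by auto
  obtain k2 where k2: "k2 < p" "\<forall>l<k2. b (\<sigma> l) = c (\<sigma> l)" "b (\<sigma> k2) < c (\<sigma> k2)"
    using assms(2) unfolding lex_less_def by auto
  define k where "k = min k1 k2"
  have "\<forall>l<k. a (\<sigma> l) = c (\<sigma> l)"
    using k1(2) k2(2) by (simp add: k_def)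
  moreover have "a (\<sigma> k) < c (\<sigma> k)"
  proof (cases k1 k2 rule: linorder_cases)
    case less then show ?thesis using k1(3) k2(2) by (simp add: k_def)
  next
    case equal then show ?thesis using k1(3) k2(3) by (simp add: k_def)
  next
    case greater then show ?thesis using k1(2) k2(3) by (simp add: k_def)
  qed
  moreover have "k < p" using k1(1) by (simp add: k_def)
  ultimately show ?thesis unfolding lex_less_def by force
qed

lemma lex_less_total:
  assumes bij: "bij_betw \<sigma> {..<p} {..<p}" and "u \<in> Zp p" "v \<in> Zp p" "u \<noteq> v"
  shows "lex_less p \<sigma> u v \<or> lex_less p \<sigma> v u"
proof -
  let ?differ = "\<lambda>k. k < p \<and> u (\<sigma> k) \<noteq> v (\<sigma> k)"
  obtain i where i: "u i \<noteq> v i" using \<open>u \<noteq> v\<close> by auto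
  have "i < p"
  proof (rule ccontr)
    assume "\<not> i < p"
    then show False using i assms(2,3) by (simp add: Zp_def)
  qed
  then have "i \<in> \<sigma> ` {..<p}" using bij by (simp add: bij_betw_def)
  then obtain k0 where "k0 < p" "\<sigma> k0 = i" by auto
  then have "?differ k0" using i by simp
  define k where "k = (LEAST k. ?differ k)"
  have k: "?differ k" unfolding k_def by (rule LeastI) fact
  have "\<forall>l<k. u (\<sigma> l) = v (\<sigma> l)"
    using k not_less_Least[of _ ?differ] unfolding k_def by (meson order.strict_trans)
  then have "\<forall>l<k. u (\<sigma> l) = v (\<sigma> l)" "\<forall>l<k. v (\<sigma> l) = u (\<sigma> l)" by simp_all
  then show ?thesis
    using k \<open>u \<noteq> v\<close> unfolding lex_less_def by (meson linorder_neqE)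
qed

lemma ex_lex_minimal:
  assumes "finite S" "S \<noteq> {}"
  shows "\<exists>m\<in>S. \<forall>v\<in>S. \<not> lex_less p \<sigma> v m"
  using assms
proof (induction S rule: finite_ne_induct)
  case (insert x F)
  then obtain m where "m \<in> F" "\<forall>v\<in>F. \<not> lex_less p \<sigma> v m" by auto
  then show ?case
    using lex_less_trans[of p \<sigma> _ x m] by (cases "lex_less p \<sigma> x m") (auto simp: lex_less_irrefl)
qed (simp add: lex_less_irrefl)

lemma lex_less_id_move:
  assumes "l < p"
  shows "lex_less p id (move u l j) u \<longleftrightarrow> l < j"
proof
  assume "l < j"
  then show "lex_less p id (move u l j) u"
    unfolding lex_less_def using assms
    by (intro conjI exI[of _ l]) (auto simp: move_apply dest: fun_cong[of _ _ l])
next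
  assume "lex_less p id (move u l j) u"
  then obtain k where k: "\<forall>m<k. move u l j m = u m" "move u l j k < u k" and "move u l j \<noteq> u"
    unfolding lex_less_def by auto
  then have "j \<noteq> l" by auto
  moreover from this have "k = l" using k(2) by (auto simp: move_apply split: if_splits)
  ultimately show "l < j" using k(1) by (auto simp: move_apply dest: spec[of _ j])
qed

section \<open>Moebius functions of finite order ideals\<close>

context
  fixes S :: "'a set" and le :: "'a \<Rightarrow> 'a \<Rightarrow> bool"
  assumes "finite S"
    and trans: "\<And>x y z. x \<in> S \<Longrightarrow> y \<in> S \<Longrightarrow> z \<in> S \<Longrightarrow> le x y \<Longrightarrow> le y z \<Longrightarrow> le x z"
    and antisym: "\<And>x y. x \<in> S \<Longrightarrow> y \<in> S \<Longrightarrow> le x y \<Longrightarrow> le y x \<Longrightarrow> x = y"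
begin

lemma is_mobius_unique:
  assumes f: "is_mobius S le f" and g: "is_mobius S le g"
  shows "f = g"
proof (intro ext)
  fix m n
  let ?below = "\<lambda>n. {a \<in> S. le a n \<and> a \<noteq> n}"
  show "f m n = g m n"
  proof (induction n rule: measure_induct_rule[of "\<lambda>n. card (?below n)"])
    case (less n)
    show ?case
    proof (cases "m \<in> S \<and> n \<in> S")
      case True
      let ?I = "{a \<in> S. le m a \<and> le a n \<and> a \<noteq> n}"
      have "card (?below a) < card (?below n)" if "a \<in> ?I" for a
      proof (rule psubset_card_mono)
        show "?below a \<subset> ?below n" using that True trans antisym by blast
      qed (simp add: \<open>finite S\<close>)
      then have "sum (f m) ?I = sum (g m) ?I" using less by (intro sum.cong) auto
      then show ?thesis using f g True unfolding is_mobius_def by simp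
    qed (use f g in \<open>auto simp: is_mobius_def\<close>)
  qed
qed

lemma mobius_eqI: "is_mobius S le f \<Longrightarrow> mobius S le = f"
  unfolding mobius_def using is_mobius_unique by blast

end

lemma hat_le_trans: "hat_le x y \<Longrightarrow> hat_le y z \<Longrightarrow> hat_le x z"
  unfolding hat_le_def by (auto split: option.splits)

lemma hat_le_antisym: "hat_le x y \<Longrightarrow> hat_le y x \<Longrightarrow> x = y"
  unfolding hat_le_def by (auto split: option.splits)

definition in_unit_cube :: "(nat \<Rightarrow> int) \<Rightarrow> (nat \<Rightarrow> int) \<Rightarrow> bool" where
  "in_unit_cube a c \<longleftrightarrow> a \<le> c \<and> (\<forall>i. c i \<le> a i + 1)"

definition alt_sign :: "nat \<Rightarrow> (nat \<Rightarrow> int) \<Rightarrow> (nat \<Rightarrow> int) \<Rightarrow> int" where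
  "alt_sign p a c = (\<Prod>i<p. (-1) ^ nat (c i - a i))"

locale finite_order_ideal =
  fixes p :: nat and I :: "(nat \<Rightarrow> int) set"
  assumes finite_ideal: "finite I"
    and ideal_subset_Np: "I \<subseteq> Np p"
    and down_closed: "b \<in> I \<Longrightarrow> c \<in> Np p \<Longrightarrow> c \<le> b \<Longrightarrow> c \<in> I"
begin

definition mu :: "(nat \<Rightarrow> int) \<Rightarrow> int" where
  "mu a = (\<Sum>c\<in>{c \<in> I. in_unit_cube a c}. alt_sign p a c)"

definition mobius_hat :: "(nat \<Rightarrow> int) option \<Rightarrow> (nat \<Rightarrow> int) option \<Rightarrow> int" where
  "mobius_hat x y = (case (x, y) of
       (None, None) \<Rightarrow> 1
     | (None, Some _) \<Rightarrow> 0
     | (Some a, None) \<Rightarrow> (if a \<in> I then - mu a else 0)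
     | (Some a, Some c) \<Rightarrow> (if a \<in> I \<and> c \<in> I \<and> in_unit_cube a c then alt_sign p a c else 0))"

text \<open>The interval [a, b] lies in I, so the sum factors over the coordinates, and the factor of
  any i with a_i < b_i is 1 - 1.\<close>

lemma sum_alt_sign_interval_eq_0:
  assumes a: "a \<in> I" and b: "b \<in> I" and "a \<le> b" "a \<noteq> b"
  shows "(\<Sum>c\<in>{c \<in> I. a \<le> c \<and> c \<le> b}. if in_unit_cube a c then alt_sign p a c else 0) = 0"
proof -
  let ?B = "\<lambda>i. if a i < b i then {a i, a i + 1} else {a i}"
  have aN: "a \<in> Np p" and bN: "b \<in> Np p" using a b ideal_subset_Np by auto
  have "{c \<in> {c \<in> I. a \<le> c \<and> c \<le> b}. in_unit_cube a c} = coord_box p ?B"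
  proof (intro equalityI subsetI)
    fix c assume c: "c \<in> {c \<in> {c \<in> I. a \<le> c \<and> c \<le> b}. in_unit_cube a c}"
    have "c i \<in> ?B i" for i
    proof -
      have "a i \<le> c i" "c i \<le> a i + 1" "c i \<le> b i"
        using c unfolding in_unit_cube_def le_fun_def by auto
      then show ?thesis by (cases "c i = a i") auto
    qed
    moreover have "c \<in> Np p" using c ideal_subset_Np by auto
    ultimately show "c \<in> coord_box p ?B" by (simp add: coord_box_def Np_iff)
  next
    fix c assume c: "c \<in> coord_box p ?B"
    have "a i \<le> c i \<and> c i \<le> b i \<and> c i \<le> a i + 1" for i
      using c \<open>a \<le> b\<close> Np_eq_0[OF aN, of i] Np_eq_0[OF bN, of i]
      by (cases "i < p") (auto simp: coord_box_def le_fun_def split: if_splits)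
    moreover from this have "c \<in> Np p"
      using Np_downward_closed[OF bN, of c] Np_nonneg[OF aN] by (meson le_fun_def order_trans)
    ultimately show "c \<in> {c \<in> {c \<in> I. a \<le> c \<and> c \<le> b}. in_unit_cube a c}"
      using down_closed[OF b] by (auto simp: in_unit_cube_def le_fun_def)
  qed
  then have "(\<Sum>c\<in>{c \<in> I. a \<le> c \<and> c \<le> b}. if in_unit_cube a c then alt_sign p a c else 0)
      = (\<Prod>i<p. \<Sum>k\<in>?B i. (-1) ^ nat (k - a i))"
    unfolding alt_sign_def
    by (simp add: sum.inter_filter[symmetric] finite_ideal
        sum_prod_coord_box[where g = "\<lambda>i k. (-1) ^ nat (k - a i)"])
  also have "\<dots> = 0"
  proof -
    obtain i where "a i \<noteq> b i" using \<open>a \<noteq> b\<close> by auto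
    moreover from this have "i < p" using Np_eq_0[OF aN, of i] Np_eq_0[OF bN, of i] by (metis leI)
    ultimately show ?thesis using \<open>a \<le> b\<close> by (auto simp: le_fun_def order_less_le intro!: prod_zero)
  qed
  finally show ?thesis .
qed

lemma mobius_hat_Some_None:
  assumes "a \<in> I"
  shows "mobius_hat (Some a) None = - (\<Sum>c\<in>{c \<in> I. a \<le> c}. mobius_hat (Some a) (Some c))"
proof -
  have "{c \<in> {c \<in> I. a \<le> c}. in_unit_cube a c} = {c \<in> I. in_unit_cube a c}"
    by (auto simp: in_unit_cube_def)
  with \<open>a \<in> I\<close> show ?thesis
    by (simp add: mobius_hat_def mu_def sum.inter_filter[symmetric] finite_ideal)
qed

lemma mobius_hat_Some_Some:
  assumes a: "a \<in> I" and b: "b \<in> I" and "a \<le> b" "a \<noteq> b"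
  shows "mobius_hat (Some a) (Some b)
    = - (\<Sum>c\<in>{c \<in> I. a \<le> c \<and> c \<le> b \<and> c \<noteq> b}. mobius_hat (Some a) (Some c))"
proof -
  have "{c \<in> I. a \<le> c \<and> c \<le> b} = insert b {c \<in> I. a \<le> c \<and> c \<le> b \<and> c \<noteq> b}"
    using b \<open>a \<le> b\<close> by auto
  then show ?thesis
    using sum_alt_sign_interval_eq_0[OF assms] a b finite_ideal by (simp add: mobius_hat_def)
qed

lemma is_mobius_hat: "is_mobius (Some ` I \<union> {None}) hat_le mobius_hat"
  unfolding is_mobius_def
proof (intro conjI allI impI ballI)
  fix x y :: "(nat \<Rightarrow> int) option"
  assume "x \<notin> Some ` I \<union> {None} \<or> y \<notin> Some ` I \<union> {None}"
  then show "mobius_hat x y = 0"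
    unfolding mobius_hat_def by (auto split: option.splits)
next
  fix x y assume x: "x \<in> Some ` I \<union> {None}" and y: "y \<in> Some ` I \<union> {None}"
  let ?open = "{z \<in> Some ` I \<union> {None}. hat_le x z \<and> hat_le z y \<and> z \<noteq> y}"
  show "mobius_hat x y = (if x = y then 1 else if hat_le x y then - sum (mobius_hat x) ?open else 0)"
  proof (cases x)
    case None
    then show ?thesis using y by (auto simp: mobius_hat_def hat_le_def split: option.splits)
  next
    case (Some a)
    with x have a: "a \<in> I" by auto
    show ?thesis
    proof (cases y)
      case None
      have "?open = Some ` {c \<in> I. a \<le> c}"
        using Some None by (auto simp: hat_le_def split: option.splits)
      then show ?thesis
        using Some None a mobius_hat_Some_None by (simp add: sum.reindex hat_le_def)
    next
      case (Some b)
      with y have b: "b \<in> I" by auto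
      consider "a = b" | "\<not> a \<le> b" | "a \<le> b" "a \<noteq> b" by blast
      then show ?thesis
      proof cases
        case 1
        then show ?thesis
          using \<open>x = Some a\<close> Some a by (simp add: mobius_hat_def in_unit_cube_def alt_sign_def)
      next
        case 2
        then show ?thesis
          using \<open>x = Some a\<close> Some by (auto simp: mobius_hat_def in_unit_cube_def hat_le_def)
      next
        case 3
        have "?open = Some ` {c \<in> I. a \<le> c \<and> c \<le> b \<and> c \<noteq> b}"
          using \<open>x = Some a\<close> Some by (auto simp: hat_le_def split: option.splits)
        then show ?thesis
          using \<open>x = Some a\<close> Some mobius_hat_Some_Some[OF a b 3] 3
          by (simp add: sum.reindex hat_le_def)
      qed
    qed
  qed
qed

lemma mobius_hat_eq: "mobius (Some ` I \<union> {None}) hat_le = mobius_hat"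
  using finite_ideal hat_le_trans hat_le_antisym is_mobius_hat by (blast intro: mobius_eqI)

lemma prod_fbox_eq_sum_unit_cube:
  assumes n: "n \<in> I"
  shows "(\<Prod>i<p. fbox (nat (n i)) (t i))
    = (\<Sum>c\<in>{c \<in> I. in_unit_cube c n}. real_of_int (alt_sign p c n) * tmon p t c)"
proof -
  have nN: "n \<in> Np p" using n ideal_subset_Np by auto
  let ?C = "\<lambda>i. if n i = 0 then {0} else {n i - 1, n i}"
  let ?g = "\<lambda>i k. (-1::real) ^ nat (n i - k) * t i powi k"
  have "fbox (nat (n i)) (t i) = (\<Sum>k\<in>?C i. ?g i k)" for i
  proof (cases "n i = 0")
    case False
    then have "1 \<le> n i" using Np_nonneg[OF nN, of i] by linarith
    then show ?thesis by (simp add: fbox_pos False)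
  qed (simp add: fbox_def)
  then have "(\<Prod>i<p. fbox (nat (n i)) (t i)) = (\<Sum>c\<in>coord_box p ?C. \<Prod>i<p. ?g i (c i))"
    by (simp add: sum_prod_coord_box[where g = ?g])
  also have "coord_box p ?C = {c \<in> I. in_unit_cube c n}"
  proof (intro equalityI subsetI)
    fix c assume c: "c \<in> coord_box p ?C"
    have "0 \<le> c i \<and> c i \<le> n i \<and> n i \<le> c i + 1" for i
      using c Np_nonneg[OF nN, of i] Np_eq_0[OF nN, of i]
      by (cases "i < p") (auto simp: coord_box_def split: if_splits)
    then show "c \<in> {c \<in> I. in_unit_cube c n}"
      using down_closed[OF n] Np_downward_closed[OF nN] by (auto simp: in_unit_cube_def le_fun_def)
  next
    fix c assume c: "c \<in> {c \<in> I. in_unit_cube c n}"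
    then have cN: "c \<in> Np p" using ideal_subset_Np by auto
    have "c i \<in> ?C i" for i
    proof -
      have "0 \<le> c i" "c i \<le> n i" "n i \<le> c i + 1"
        using c Np_nonneg[OF cN] by (auto simp: in_unit_cube_def le_fun_def)
      then show ?thesis by (cases "c i = n i") auto
    qed
    with cN show "c \<in> coord_box p ?C" by (simp add: coord_box_def Np_iff)
  qed
  also have "(\<Sum>c\<in>{c \<in> I. in_unit_cube c n}. \<Prod>i<p. ?g i (c i))
      = (\<Sum>c\<in>{c \<in> I. in_unit_cube c n}. real_of_int (alt_sign p c n) * tmon p t c)"
    by (simp add: alt_sign_def tmon_def prod.distrib)
  finally show ?thesis .
qed

lemma sum_prod_fbox_eq_sum_mu:
  "(\<Sum>n\<in>I. \<Prod>i<p. fbox (nat (n i)) (t i)) = (\<Sum>c\<in>I. real_of_int (mu c) * tmon p t c)"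
proof -
  have "(\<Sum>n\<in>I. \<Prod>i<p. fbox (nat (n i)) (t i))
      = (\<Sum>n\<in>I. \<Sum>c\<in>{c \<in> I. in_unit_cube c n}. real_of_int (alt_sign p c n) * tmon p t c)"
    by (simp add: prod_fbox_eq_sum_unit_cube)
  also have "\<dots> = (\<Sum>c\<in>I. \<Sum>n\<in>{n \<in> I. in_unit_cube c n}. real_of_int (alt_sign p c n) * tmon p t c)"
    by (rule sum.swap_restrict[OF finite_ideal finite_ideal])
  also have "\<dots> = (\<Sum>c\<in>I. real_of_int (mu c) * tmon p t c)"
    by (simp add: mu_def sum_distrib_right)
  finally show ?thesis .
qed

end

section \<open>Polymatroids and their lexicographic shellings\<close>

locale polymatroid_on =
  fixes p :: nat and P :: "(nat \<Rightarrow> int) set"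
  assumes polymatroid: "polymatroid p P"
begin

lemma finite_P: "finite P"
  using polymatroid by (simp add: polymatroid_def)

lemma P_subset_Np: "P \<subseteq> Np p"
  using polymatroid by (simp add: polymatroid_def)

lemma rk_eq: "u \<in> P \<Longrightarrow> rk p P = vnorm p u"
  using polymatroid unfolding polymatroid_def rk_def by (metis someI)

lemma exchange:
  "u \<in> P \<Longrightarrow> v \<in> P \<Longrightarrow> i < p \<Longrightarrow> v i < u i \<Longrightarrow> \<exists>j<p. u j < v j \<and> move u i j \<in> P"
  using polymatroid unfolding polymatroid_def by blast

lemma P_subset_indep_pts: "P \<subseteq> indep_pts p P"
  using P_subset_Np unfolding indep_pts_def by auto

lemma finite_indep_pts: "finite (indep_pts p P)"
proof (rule finite_subset)
  show "indep_pts p P \<subseteq> (\<Union>u\<in>P. coord_box p (\<lambda>i. {0..u i}))"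
    unfolding indep_pts_def coord_box_def le_fun_def by (auto simp: Np_iff)
qed (simp add: finite_P finite_coord_box)

end

sublocale polymatroid_on \<subseteq> indep: finite_order_ideal p "indep_pts p P"
proof unfold_locales
  show "finite (indep_pts p P)" by (rule finite_indep_pts)
qed (auto simp: indep_pts_def intro: order_trans)

context polymatroid_on
begin

lemma muP_eq_mu: "n \<in> indep_pts p P \<Longrightarrow> muP p P n = indep.mu n"
  unfolding muP_def hatP_def indep.mobius_hat_eq by (simp add: indep.mobius_hat_def)

lemma Box_eq_Mob: "Box p P t = Mob p P t"
  unfolding Box_def Mob_def indep.sum_prod_fbox_eq_sum_mu by (simp add: muP_eq_mu)

end

locale lex_shelling = polymatroid_on +
  fixes \<sigma> :: "nat \<Rightarrow> nat"
  assumes bij: "bij_betw \<sigma> {..<p} {..<p}"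
begin

abbreviation earlier :: "(nat \<Rightarrow> int) \<Rightarrow> (nat \<Rightarrow> int) set" where
  "earlier u \<equiv> {v \<in> P. lex_less p \<sigma> v u}"

abbreviation L :: "(nat \<Rightarrow> int) \<Rightarrow> nat set" where
  "L u \<equiv> Lset p u (earlier u)"

lemma L_pos: "u \<in> P \<Longrightarrow> l \<in> L u \<Longrightarrow> l < p \<and> 1 \<le> u l"
  using Lset_pos[of "earlier u" p u l] P_subset_Np by (auto simp: lex_less_irrefl)

lemma covered_by_earlier_iff:
  assumes u: "u \<in> P" and "n \<le> u"
  shows "(\<exists>v\<in>earlier u. n \<le> v) \<longleftrightarrow> (\<exists>l\<in>L u. n l < u l)"
proof
  txt \<open>Exchange at the first coordinate, in the order \<sigma>, where v drops below u.\<close>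
  assume "\<exists>v\<in>earlier u. n \<le> v"
  then obtain v k where v: "v \<in> P" "n \<le> v" and k: "k < p" "\<forall>l<k. v (\<sigma> l) = u (\<sigma> l)"
    "v (\<sigma> k) < u (\<sigma> k)"
    unfolding lex_less_def by auto
  define i where "i = \<sigma> k"
  have "i < p" using bij k(1) unfolding bij_betw_def i_def by auto
  then obtain j where j: "j < p" "u j < v j" and w: "move u i j \<in> P"
    using exchange[OF u v(1)] k(3) unfolding i_def by auto
  have "j \<noteq> i" using j k(3) unfolding i_def by auto
  have "\<sigma> l \<noteq> i" if "l < k" for l
    using bij that k(1) unfolding bij_betw_def inj_on_def i_def by fastforce
  moreover have "\<sigma> l \<noteq> j" if "l < k" for l
    using k(2) that j(2) by auto
  ultimately have "lex_less p \<sigma> (move u i j) u"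
    unfolding lex_less_def using k(1) \<open>j \<noteq> i\<close>
    by (intro conjI exI[of _ k]) (auto simp: move_apply i_def dest: fun_cong[of _ _ i])
  then have "i \<in> L u" unfolding Lset_def using \<open>i < p\<close> j(1) w by auto
  moreover have "n i < u i" using v(2) k(3) unfolding i_def le_fun_def
    by (meson order_le_less_trans)
  ultimately show "\<exists>l\<in>L u. n l < u l" by blast
next
  assume "\<exists>l\<in>L u. n l < u l"
  then obtain l j where "n l < u l" "move u l j \<in> earlier u"
    unfolding Lset_def by auto
  moreover have "n \<le> move u l j"
    using \<open>n \<le> u\<close> \<open>n l < u l\<close> unfolding le_fun_def
    by (auto simp: move_apply) (metis add_increasing2 zero_le_one)
  ultimately show "\<exists>v\<in>earlier u. n \<le> v" by blast
qed

definition cell :: "(nat \<Rightarrow> int) \<Rightarrow> (nat \<Rightarrow> int) set" where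
  "cell u = {n \<in> Np p. n \<le> u \<and> (\<forall>v\<in>earlier u. \<not> n \<le> v)}"

definition cell_poly :: "(nat \<Rightarrow> real) \<Rightarrow> (nat \<Rightarrow> int) \<Rightarrow> real" where
  "cell_poly t u =
     (\<Prod>i<p. if i \<in> L u then t i powi u i - t i powi (u i - 1) else t i powi u i)"

lemma cell_eq_coord_box:
  assumes u: "u \<in> P"
  shows "cell u = coord_box p (\<lambda>i. if i \<in> L u then {u i} else {0..u i})"
proof -
  have uN: "u \<in> Np p" using u P_subset_Np by auto
  have "n \<in> cell u \<longleftrightarrow> n \<in> Np p \<and> n \<le> u \<and> \<not> (\<exists>l\<in>L u. n l < u l)" for n
    unfolding cell_def using covered_by_earlier_iff[OF u, of n] by blast
  also have "\<dots> n \<longleftrightarrow> n \<in> Np p \<and> n \<le> u \<and> (\<forall>l\<in>L u. u l \<le> n l)" for n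
    by (auto simp: not_less)
  also have "\<dots> n \<longleftrightarrow> n \<in> coord_box p (\<lambda>i. if i \<in> L u then {u i} else {0..u i})" for n
    using L_pos[OF u] Np_eq_0[OF uN] Np_nonneg[OF uN]
    unfolding coord_box_def Np_iff le_fun_def
    by (auto split: if_splits intro: order_antisym) (metis linorder_not_le order_refl)
  finally show ?thesis by blast
qed

lemma indep_pts_eq_Union_cell: "indep_pts p P = (\<Union>u\<in>P. cell u)"
proof (intro equalityI subsetI)
  fix n assume n: "n \<in> indep_pts p P"
  then have "finite {u \<in> P. n \<le> u}" "{u \<in> P. n \<le> u} \<noteq> {}"
    using finite_P unfolding indep_pts_def by auto
  then obtain u where "u \<in> {u \<in> P. n \<le> u}" "\<forall>v\<in>{u \<in> P. n \<le> u}. \<not> lex_less p \<sigma> v u"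
    using ex_lex_minimal by blast
  then show "n \<in> (\<Union>u\<in>P. cell u)" using n unfolding cell_def indep_pts_def by auto
qed (auto simp: cell_def indep_pts_def)

lemma finite_cell: "u \<in> P \<Longrightarrow> finite (cell u)"
  by (simp add: cell_eq_coord_box finite_coord_box)

lemma disjoint_cell:
  assumes "u \<in> P" "v \<in> P" "u \<noteq> v"
  shows "cell u \<inter> cell v = {}"
proof -
  have "u \<in> Zp p" "v \<in> Zp p" using assms P_subset_Np by (auto simp: Np_def)
  then have "lex_less p \<sigma> u v \<or> lex_less p \<sigma> v u" using lex_less_total[OF bij] assms(3) by blast
  then show ?thesis using assms unfolding cell_def by auto
qed

lemma Box_eq_sum_cell_poly: "Box p P t = (\<Sum>u\<in>P. cell_poly t u)"
proof -
  have "Box p P t = (\<Sum>u\<in>P. \<Sum>n\<in>cell u. \<Prod>i<p. fbox (nat (n i)) (t i))"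
    unfolding Box_def indep_pts_eq_Union_cell
    by (rule sum.UNION_disjoint)
      (auto simp: finite_P finite_cell disjoint_cell)
  also have "\<dots> = (\<Sum>u\<in>P. cell_poly t u)"
  proof (rule sum.cong[OF refl])
    fix u assume u: "u \<in> P"
    then have "0 \<le> u i" for i using P_subset_Np Np_nonneg by blast
    then show "(\<Sum>n\<in>cell u. \<Prod>i<p. fbox (nat (n i)) (t i)) = cell_poly t u"
      unfolding cell_eq_coord_box[OF u] sum_prod_coord_box[where g = "\<lambda>i k. fbox (nat k) (t i)"]
        cell_poly_def
      using L_pos[OF u] by (intro prod.cong refl) (auto simp: sum_fbox_atLeastAtMost fbox_pos)
  qed
  finally show ?thesis .
qed

lemma St_eq_coord_box:
  assumes u: "u \<in> P"
  shows "St p u (earlier u) = coord_box p (\<lambda>i. if i \<in> L u then {u i - 1, u i} else {u i})"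
    (is "_ = coord_box p ?A")
proof (intro equalityI subsetI)
  have uN: "u \<in> Np p" using u P_subset_Np by auto
  fix n assume "n \<in> St p u (earlier u)"
  then obtain J where J: "J \<subseteq> L u" "n = vsub u (eset J)" unfolding St_def by auto
  then have "\<forall>i\<in>J. i < p" using L_pos[OF u] by blast
  then show "n \<in> coord_box p ?A"
    using J Np_eq_0[OF uN] by (auto simp: coord_box_def vsub_def eset_def)
next
  have uN: "u \<in> Np p" using u P_subset_Np by auto
  fix n assume n: "n \<in> coord_box p ?A"
  define J where "J = {i \<in> L u. n i = u i - 1}"
  have "n i = vsub u (eset J) i" for i
  proof (cases "i < p")
    case True
    then have "n i \<in> ?A i" using n by (simp add: coord_box_def)
    then show ?thesis by (auto simp: J_def vsub_def eset_def split: if_splits)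
  next
    case False
    then show ?thesis
      using n L_pos[OF u] Np_eq_0[OF uN, of i] by (auto simp: coord_box_def J_def vsub_def eset_def)
  qed
  then show "n \<in> St p u (earlier u)" unfolding St_def J_def by auto
qed

lemma St_subset_indep_pts: "u \<in> P \<Longrightarrow> St p u (earlier u) \<subseteq> indep_pts p P"
proof
  fix n assume u: "u \<in> P" and "n \<in> St p u (earlier u)"
  then have n: "n \<in> coord_box p (\<lambda>i. if i \<in> L u then {u i - 1, u i} else {u i})"
    by (simp add: St_eq_coord_box)
  have uN: "u \<in> Np p" using u P_subset_Np by auto
  have "0 \<le> n i \<and> n i \<le> u i" for i
  proof (cases "i < p")
    case True
    then show ?thesis
      using n L_pos[OF u, of i] Np_nonneg[OF uN, of i]
      by (auto simp: coord_box_def split: if_splits)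
  next
    case False
    then show ?thesis using n Np_eq_0[OF uN, of i] by (simp add: coord_box_def)
  qed
  then have "n \<in> Np p" "n \<le> u"
    using Np_downward_closed[OF uN, of n] by (auto simp: le_fun_def)
  then show "n \<in> indep_pts p P"
    using u P_subset_indep_pts indep.down_closed by blast
qed

lemma sum_St_eq_cell_poly:
  assumes u: "u \<in> P"
  shows "(\<Sum>n\<in>St p u (earlier u). (-1) ^ nat (rk p P - vnorm p n) * tmon p t n) = cell_poly t u"
proof -
  let ?A = "\<lambda>i. if i \<in> L u then {u i - 1, u i} else {u i}"
  let ?h = "\<lambda>i k. (-1::real) ^ nat (u i - k) * t i powi k"
  have "(-1) ^ nat (rk p P - vnorm p n) * tmon p t n = (\<Prod>i<p. ?h i (n i))"
    if n: "n \<in> coord_box p ?A" for n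
  proof -
    have "u \<in> Np p" using u P_subset_Np by auto
    then have "u i - n i \<ge> 0" for i
      using n Np_eq_0[of u p i] by (cases "i < p") (auto simp: coord_box_def split: if_splits)
    moreover have "rk p P - vnorm p n = (\<Sum>i<p. u i - n i)" by (simp add: rk_eq[OF u] vnorm_diff)
    ultimately show ?thesis
      by (simp add: power_nat_sum tmon_def prod.distrib)
  qed
  then have "(\<Sum>n\<in>St p u (earlier u). (-1) ^ nat (rk p P - vnorm p n) * tmon p t n)
      = (\<Prod>i<p. \<Sum>k\<in>?A i. ?h i k)"
    by (simp add: St_eq_coord_box[OF u] sum_prod_coord_box[symmetric])
  also have "\<dots> = cell_poly t u"
    unfolding cell_poly_def by (intro prod.cong refl) auto
  finally show ?thesis .
qed

lemma Stal_eq_sum_cell_poly: "Stal p \<sigma> P t = (\<Sum>u\<in>P. cell_poly t u)"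
proof -
  let ?sign_mon = "\<lambda>n. (-1::real) ^ nat (rk p P - vnorm p n) * tmon p t n"
  have "Stal p \<sigma> P t = (\<Sum>n\<in>indep_pts p P. \<Sum>u\<in>{u\<in>P. n \<in> St p u (earlier u)}. ?sign_mon n)"
    unfolding Stal_def cnt_def by (intro sum.cong refl) (simp add: mult.commute)
  also have "\<dots> = (\<Sum>u\<in>P. \<Sum>n\<in>St p u (earlier u). ?sign_mon n)"
    using sum.swap_restrict[OF finite_indep_pts finite_P, of "\<lambda>n u. ?sign_mon n"
        "\<lambda>n u. n \<in> St p u (earlier u)"] St_subset_indep_pts
    by (simp add: Int_absorb1 Collect_conj_eq)
  finally show ?thesis by (simp add: sum_St_eq_cell_poly)
qed

end

context polymatroid_on
begin

interpretation std: lex_shelling p P id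
  by unfold_locales simp

lemma Cave_eq_sum_cell_poly:
  assumes t: "\<forall>i<p. t i \<noteq> 0"
  shows "Cave p P t = (\<Sum>u\<in>P. std.cell_poly t u)"
proof -
  define c where "c u i = (if \<exists>j. i < j \<and> j < p \<and> move u i j \<in> P then 1 else 0 :: real)" for u i
  have c_L: "c u i = (if i \<in> std.L u then 1 else 0)" if "i < p" for u i
    using that lex_less_id_move[OF that, of u] unfolding c_def Lset_def by auto
  have "Cave p P t = (\<Sum>u\<in>P. (\<Prod>i<p - 1. 1 - c u i * inverse (t i)) * tmon p t u)"
    unfolding Cave_def ind_def c_def
    by (rule sum.mono_neutral_cong_right[OF finite_Np_vnorm])
      (use P_subset_Np rk_eq in auto)
  also have "\<dots> = (\<Sum>u\<in>P. std.cell_poly t u)"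
  proof (rule sum.cong[OF refl])
    fix u assume "u \<in> P"
    txt \<open>The Cave product stops at p - 1; the missing factor is 1, as no j exceeds p - 1.\<close>
    have "(\<Prod>i<p - 1. 1 - c u i * inverse (t i)) = (\<Prod>i<p. 1 - c u i * inverse (t i))"
    proof (cases p)
      case (Suc q)
      then have "c u q = 0" by (auto simp: c_def)
      then show ?thesis by (simp add: Suc lessThan_Suc)
    qed simp
    also have "\<dots> * tmon p t u = (\<Prod>i<p. (1 - c u i * inverse (t i)) * t i powi u i)"
      by (simp add: tmon_def prod.distrib)
    also have "\<dots> = std.cell_poly t u"
      unfolding std.cell_poly_def using t
      by (intro prod.cong refl) (auto simp: c_L power_int_diff field_simps)
    finally show "(\<Prod>i<p - 1. 1 - c u i * inverse (t i)) * tmon p t u = std.cell_poly t u" .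
  qed
  finally show ?thesis .
qed

end

theorem theorem1p3:
  fixes p :: nat and P :: "(nat \<Rightarrow> int) set" and \<sigma> :: "nat \<Rightarrow> nat"
  assumes "polymatroid p P"
    and "bij_betw \<sigma> {..<p} {..<p}"
  shows "\<forall>t :: nat \<Rightarrow> real. (\<forall>i<p. t i \<noteq> 0) \<longrightarrow>
           Cave p P t = Stal p \<sigma> P t \<and> Stal p \<sigma> P t = Box p P t \<and> Box p P t = Mob p P t"
proof (intro allI impI)
  fix t :: "nat \<Rightarrow> real" assume t: "\<forall>i<p. t i \<noteq> 0"
  interpret polymatroid_on p P by unfold_locales fact
  interpret lex: lex_shelling p P \<sigma> by unfold_locales fact
  interpret std: lex_shelling p P id by unfold_locales simp
  have "Cave p P t = Box p P t"
    using Cave_eq_sum_cell_poly[OF t] std.Box_eq_sum_cell_poly by simp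
  moreover have "Stal p \<sigma> P t = Box p P t"
    using lex.Stal_eq_sum_cell_poly lex.Box_eq_sum_cell_poly by simp
  ultimately show "Cave p P t = Stal p \<sigma> P t \<and> Stal p \<sigma> P t = Box p P t \<and> Box p P t = Mob p P t"
    using Box_eq_Mob by simp
qed

end
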